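(* Let $S\ge 1$, let $h_1,h_2,\ldots\in[S]$ be an arbitrary side-information sequence, let $T\ge 1$, and let $\mathbf g_1,\ldots,\mathbf g_T\in\mathbb B$ be arbitrary. Consider the per-state KT betting algorithm with initial wealth $\mathsf W_0>0$, which at round $t$ plays $$\mathbf w_t=\mathbf v\big(\mathbf g^{t-1}(h_t;h^{t-1})\big)\,\mathsf W_{t-1}.$$ For $s\in[S]$ let $T_s=|\{t\in[T]: h_t=s\}|$, and let $\phi_{T_{1:S}}:\mathbb R^S\to(-\infty,+\infty]$ be the Fenchel dual of the function $F(f_1,\ldots,f_S)=\prod_{s=1}^S\psi_{T_s}(f_s)$. Then: (i) $\mathsf W_T\ge \mathsf W_0\prod_{s=1}^S\Psi\big(\mathbf g^T(s;h^T)\big)$; (ii) for every $\mathbf u_1,\ldots,\mathbf u_S\in V$, $$\mathsf{Reg}(\mathbf u_{1:S}[H];\mathbf g^T)\le \mathsf W_0+\mathsf W_0\,\phi_{T_{1:S}}\Big(\tfrac{\|\mathbf u_1\|}{\mathsf W_0},\ldots,\tfrac{\|\mathbf u_S\|}{\mathsf W_0}\Big).$$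
   Context: Let $V$ be a real Hilbert space with inner product $\langle\cdot,\cdot\rangle$ and norm $\|\cdot\|$, and $\mathbb B=\{\mathbf x\in V:\|\mathbf x\|\le 1\}$. For a finite tuple $\mathbf a=(\mathbf a_1,\ldots,\mathbf a_n)$ of vectors, $\textstyle\sum\mathbf a=\mathbf a_1+\cdots+\mathbf a_n$ (the empty tuple has sum $0$) and $|\mathbf a|=n$. KT potential: for an integer $t\ge0$ and $x\in[-t,t]$, $q_t(x)=B\big(\tfrac{t+x+1}{2},\tfrac{t-x+1}{2}\big)/B\big(\tfrac12,\tfrac12\big)$ with $B$ the Beta function, and $\psi_t(x)=2^tq_t(x)$ (so $\psi_0(0)=1$); set $\psi_t(x)=+\infty$ for $x\notin[-t,t]$. For a finite tuple $\mathbf a$ of vectors in $\mathbb B$, $\Psi(\mathbf a)=\psi_{|\mathbf a|}(\|\sum\mathbf a\|)$, and the vectorial KT bet is $\mathbf v(\mathbf a)=\frac{1}{|\mathbf a|+1}\sum\mathbf a$. Protocol: at round $t$ the algorithm plays $\mathbf w_t\in V$ (depending only on $\mathbf g_1,\ldots,\mathbf g_{t-1}$ and the side information available up to round $t$), then observes $\mathbf g_t\in\mathbb B$; its wealth is $\mathsf W_t=\mathsf W_0+\sum_{i=1}^t\langle\mathbf g_i,\mathbf w_i\rangle$. Side information: $h_t\in[S]$ is revealed before the play at round $t$. For $s\in[S]$, $\mathbf g^t(s;h^t)$ denotes the tuple of those $\mathbf g_i$ with $i\le t$ and $h_i=s$, in increasing order of $i$. For $\mathbf u_1,\ldots,\mathbf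 u_S\in V$, the adaptive competitor $\mathbf u_{1:S}[H]$ plays $\mathbf u_{h_t}$ at round $t$, and its regret is $\mathsf{Reg}(\mathbf u_{1:S}[H];\mathbf g^T)=\sum_{t=1}^T\langle\mathbf g_t,\mathbf u_{h_t}\rangle-\sum_{t=1}^T\langle\mathbf g_t,\mathbf w_t\rangle$. The Fenchel dual of $F:\mathbb R^S\to(-\infty,+\infty]$ is $F^\star(\mathbf y)=\sup_{\mathbf x\in\mathbb R^S}(\mathbf y^\top\mathbf x-F(\mathbf x))$. *)

theory Defs
  imports "HOL-Analysis.Analysis" "HOL-Library.FuncSet"
begin

definition kt_psi :: "nat \<Rightarrow> real \<Rightarrow> ereal" where
  "kt_psi t x = (if - real t \<le> x \<and> x \<le> real t
     then ereal (2 ^ t * (Beta ((real t + x + 1) / 2) ((real t - x + 1) / 2) / Beta (1/2) (1/2)))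
     else \<infinity>)"

definition kt_Psi :: "'v::real_inner list \<Rightarrow> ereal" where
  "kt_Psi a = kt_psi (length a) (norm (sum_list a))"

definition kt_bet :: "'v::real_inner list \<Rightarrow> 'v" where
  "kt_bet a = (1 / (real (length a) + 1)) *\<^sub>R sum_list a"

definition sub_tuple :: "(nat \<Rightarrow> 'v) \<Rightarrow> (nat \<Rightarrow> nat) \<Rightarrow> nat \<Rightarrow> nat \<Rightarrow> 'v list" where
  "sub_tuple g h t s = map g (filter (\<lambda>i. h i = s) [1..<Suc t])"

definition wealth :: "real \<Rightarrow> (nat \<Rightarrow> 'v::real_inner) \<Rightarrow> (nat \<Rightarrow> 'v) \<Rightarrow> nat \<Rightarrow> real" where
  "wealth W0 g w t = W0 + (\<Sum>i=1..t. inner (g i) (w i))"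

definition regret :: "(nat \<Rightarrow> 'v::real_inner) \<Rightarrow> (nat \<Rightarrow> nat) \<Rightarrow> (nat \<Rightarrow> 'v) \<Rightarrow> (nat \<Rightarrow> 'v) \<Rightarrow> nat \<Rightarrow> real" where
  "regret u h g w T = (\<Sum>t=1..T. inner (g t) (u (h t))) - (\<Sum>t=1..T. inner (g t) (w t))"

definition state_count :: "(nat \<Rightarrow> nat) \<Rightarrow> nat \<Rightarrow> nat \<Rightarrow> nat" where
  "state_count h T s = card {t \<in> {1..T}. h t = s}"

text \<open>Fenchel dual of a function F : R^S \<rightarrow> (-\<infinity>,+\<infinity>], vectors of R^S represented as
  extensional functions on {1..S}.\<close>
definition fenchel_dual :: "nat \<Rightarrow> ((nat \<Rightarrow> real) \<Rightarrow> ereal) \<Rightarrow> (nat \<Rightarrow> real) \<Rightarrow> ereal" where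
  "fenchel_dual S F y = (SUP x \<in> ({1..S} \<rightarrow>\<^sub>E (UNIV :: real set)).
      ereal (\<Sum>s=1..S. y s * x s) - F x)"

definition kt_phi :: "nat \<Rightarrow> (nat \<Rightarrow> nat) \<Rightarrow> (nat \<Rightarrow> real) \<Rightarrow> ereal" where
  "kt_phi S Tc = fenchel_dual S (\<lambda>f. \<Prod>s\<in>{1..S}. kt_psi (Tc s) (f s))"

end

theory Submission
  imports Defs
begin

text \<open>
  Write \<open>\<psi>\<^sub>t(x) \<propto> 2\<^sup>t B((t+1+x)/2, (t+1-x)/2)\<close> as \<open>2\<^sup>t\<close> times the integral over
  \<open>p \<in> (0,1)\<close> of the Beta kernel; symmetrised in \<open>x\<close>, the kernel is \<open>K(p) cosh(x L(p))\<close>.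
  Since \<open>z \<mapsto> cosh(u \<surd>z)\<close> is convex on \<open>z \<ge> 0\<close> (a power series in \<open>z\<close> with nonnegative
  coefficients), and \<open>\<parallel>x + g\<parallel>\<^sup>2 \<le> r\<^sup>2 + 2r\<alpha> + 1\<close> for \<open>r = \<parallel>x\<parallel>\<close>, \<open>\<langle>g, x\<rangle> = \<alpha> r\<close>,
  \<open>\<parallel>g\<parallel> \<le> 1\<close>, the value at \<open>\<parallel>x + g\<parallel>\<close> is dominated by the \<open>(1\<plusminus>\<alpha>)/2\<close>-mixture of the
  values at \<open>r \<plusminus> 1\<close>. The Beta recurrence turns this mixture into the one-step bound
  \<open>\<Psi>(a @ [g]) \<le> \<Psi>(a) (1 + \<langle>g, v(a)\<rangle>)\<close>. At each round only the potential of the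
  current state changes, while the wealth is multiplied by exactly \<open>1 + \<langle>g\<^sub>t, v\<rangle>\<close>, so
  the wealth dominates \<open>W\<^sub>0\<close> times the product of the per-state potentials. The regret
  bound follows by grouping the competitor's gains by state, Cauchy--Schwarz, and
  evaluating the Fenchel dual at \<open>f\<^sub>s = \<parallel>\<Sigma> g\<^sup>T(s)\<parallel>\<close>.
\<close>

lemma power_convex_combination_le:
  fixes x y \<theta> :: real
  assumes "0 \<le> x" "0 \<le> y" "0 \<le> \<theta>" "\<theta> \<le> 1"
  shows "(\<theta> * x + (1 - \<theta>) * y) ^ n \<le> \<theta> * x ^ n + (1 - \<theta>) * y ^ n"
proof -
  have "convex_on {0..} (\<lambda>x::real. x ^ n)"
    by (cases "even n") (auto intro: convex_power_odd convex_on_subset[OF convex_power_even])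
  from convex_onD[OF this, of \<theta> y x] assms show ?thesis by (simp add: algebra_simps)
qed

lemma cosh_mult_abs: "cosh (u * \<bar>x\<bar>) = cosh (u * x :: real)"
  by (metis abs_abs abs_mult cosh_real_abs)

lemma cosh_abs_mult: "cosh (\<bar>u\<bar> * x) = cosh (u * x :: real)"
  using cosh_mult_abs[of x u] by (simp add: mult.commute)

lemma cosh_mult_sqrt_convex_combination_le:
  fixes u x y \<theta> :: real
  assumes "0 \<le> x" "0 \<le> y" "0 \<le> \<theta>" "\<theta> \<le> 1"
  shows "cosh (u * sqrt (\<theta> * x + (1 - \<theta>) * y))
           \<le> \<theta> * cosh (u * sqrt x) + (1 - \<theta>) * cosh (u * sqrt y)"
proof -
  define a where "a n = (if even n then u ^ n / fact n else 0)" for n :: nat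
  have series: "(\<lambda>n. a n * z ^ (n div 2)) sums cosh (u * sqrt z)" if "0 \<le> z" for z
  proof -
    have "(if even n then (u * sqrt z) ^ n /\<^sub>R fact n else 0) = a n * z ^ (n div 2)" for n
      using that by (cases "even n") (auto simp: a_def power_mult_distrib power_mult divide_inverse elim!: evenE)
    with cosh_converges[of "u * sqrt z"] show ?thesis by simp
  qed
  have "a n * (\<theta> * x + (1 - \<theta>) * y) ^ (n div 2)
          \<le> \<theta> * (a n * x ^ (n div 2)) + (1 - \<theta>) * (a n * y ^ (n div 2))" for n
    using mult_left_mono[OF power_convex_combination_le[OF assms, of "n div 2"], of "a n"]
    by (simp add: a_def zero_le_even_power algebra_simps)
  moreover have "(\<lambda>n. \<theta> * (a n * x ^ (n div 2)) + (1 - \<theta>) * (a n * y ^ (n div 2))) sums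
                   (\<theta> * cosh (u * sqrt x) + (1 - \<theta>) * cosh (u * sqrt y))"
    by (intro sums_add sums_mult series assms)
  ultimately show ?thesis
    using assms by (intro sums_le[OF _ series]) auto
qed

lemma cosh_le_mixture:
  fixes u r \<alpha> s :: real
  assumes "0 \<le> r" "-1 \<le> \<alpha>" "\<alpha> \<le> 1" "0 \<le> s" "s\<^sup>2 \<le> r\<^sup>2 + 2 * r * \<alpha> + 1"
  shows "cosh (u * s) \<le> (1 + \<alpha>) / 2 * cosh (u * (r + 1)) + (1 - \<alpha>) / 2 * cosh (u * (r - 1))"
proof -
  define \<theta> where "\<theta> = (1 + \<alpha>) / 2"
  have \<theta>: "0 \<le> \<theta>" "\<theta> \<le> 1" "1 - \<theta> = (1 - \<alpha>) / 2" using assms(2,3) by (auto simp: \<theta>_def field_simps)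
  have mix: "\<theta> * (r + 1)\<^sup>2 + (1 - \<theta>) * (r - 1)\<^sup>2 = r\<^sup>2 + 2 * r * \<alpha> + 1"
    by (simp add: \<theta>_def power2_eq_square field_simps)
  have "s \<le> sqrt (r\<^sup>2 + 2 * r * \<alpha> + 1)"
    using assms(5) real_le_rsqrt by blast
  then have le: "\<bar>u\<bar> * s \<le> \<bar>u\<bar> * sqrt (\<theta> * (r + 1)\<^sup>2 + (1 - \<theta>) * (r - 1)\<^sup>2)"
    unfolding mix by (rule mult_left_mono) simp
  have "0 \<le> \<bar>u\<bar> * s"
    using assms(4) by simp
  with le have "cosh (\<bar>u\<bar> * s) \<le> cosh (\<bar>u\<bar> * sqrt (\<theta> * (r + 1)\<^sup>2 + (1 - \<theta>) * (r - 1)\<^sup>2))"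
    by (subst cosh_real_nonneg_le_iff) auto
  then have "cosh (u * s) \<le> cosh (u * sqrt (\<theta> * (r + 1)\<^sup>2 + (1 - \<theta>) * (r - 1)\<^sup>2))"
    by (simp only: cosh_abs_mult)
  also have "\<dots> \<le> \<theta> * cosh (u * sqrt ((r + 1)\<^sup>2)) + (1 - \<theta>) * cosh (u * sqrt ((r - 1)\<^sup>2))"
    using \<theta> by (intro cosh_mult_sqrt_convex_combination_le) auto
  finally have "cosh (u * s) \<le> \<theta> * cosh (u * (r + 1)) + (1 - \<theta>) * cosh (u * (r - 1))"
    by (simp add: cosh_mult_abs)
  then show ?thesis
    unfolding \<theta>(3) by (simp add: \<theta>_def)
qed

definition Beta_centered :: "real \<Rightarrow> real \<Rightarrow> real" where
  "Beta_centered c y = Beta ((c + y) / 2) ((c - y) / 2)"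

definition Beta_kernel :: "real \<Rightarrow> real \<Rightarrow> real \<Rightarrow> real" where
  "Beta_kernel c y p = p powr ((c + y) / 2 - 1) * (1 - p) powr ((c - y) / 2 - 1)"

lemma Beta_centered_minus [simp]: "Beta_centered c (- y) = Beta_centered c y"
  by (simp add: Beta_centered_def Beta_commute)

lemma Beta_pos: "0 < a \<Longrightarrow> 0 < b \<Longrightarrow> 0 < Beta a (b :: real)"
  by (simp add: Beta_def Gamma_real_pos)

lemma Beta_centered_pos: "\<bar>y\<bar> < c \<Longrightarrow> 0 < Beta_centered c y"
  unfolding Beta_centered_def by (intro Beta_pos) auto

lemma has_integral_Beta_kernel:
  assumes "\<bar>y\<bar> < c"
  shows "(Beta_kernel c y has_integral Beta_centered c y) {0<..<1}"
  using has_integral_Beta_real[of "(c + y) / 2" "(c - y) / 2"] assms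
  unfolding Beta_kernel_def Beta_centered_def by (simp add: has_integral_Icc_iff_Ioo)

lemma Beta_kernel_eq_exp:
  assumes "0 < p" "p < 1"
  shows "Beta_kernel c y p = exp ((c / 2 - 1) * ln (p * (1 - p))) * exp (y * (ln (p / (1 - p)) / 2))"
  using assms by (simp add: Beta_kernel_def powr_def ln_mult ln_div flip: exp_add) (simp add: field_simps)

lemma Beta_kernel_symmetrized:
  assumes "0 < p" "p < 1"
  shows "(Beta_kernel c y p + Beta_kernel c (- y) p) / 2
           = exp ((c / 2 - 1) * ln (p * (1 - p))) * cosh (y * (ln (p / (1 - p)) / 2))"
  using assms by (simp add: Beta_kernel_eq_exp cosh_def field_simps)

lemma Beta_centered_le_mixture:
  fixes c r \<alpha> s :: real
  assumes "0 \<le> r" "r + 1 < c" "-1 \<le> \<alpha>" "\<alpha> \<le> 1" "0 \<le> s" "s\<^sup>2 \<le> r\<^sup>2 + 2 * r * \<alpha> + 1"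
  shows "Beta_centered c s \<le> (1 + \<alpha>) / 2 * Beta_centered c (r + 1) + (1 - \<alpha>) / 2 * Beta_centered c (r - 1)"
proof -
  have "s\<^sup>2 \<le> (r + 1)\<^sup>2"
    using assms(1,4,6) mult_left_mono[of \<alpha> 1 r] by (simp add: power2_sum)
  then have "s \<le> r + 1"
    using assms(1) by (auto intro: power2_le_imp_le)
  then have "\<bar>s\<bar> < c" "\<bar>r + 1\<bar> < c" "\<bar>r - 1\<bar> < c"
    using assms(1,2,5) by linarith+
  define K where "K y p = (Beta_kernel c y p + Beta_kernel c (- y) p) / 2" for y p
  have K: "(K y has_integral Beta_centered c y) {0<..<1}" if "\<bar>y\<bar> < c" for y
  proof -
    have "((\<lambda>p. Beta_kernel c y p + Beta_kernel c (- y) p) has_integral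
            Beta_centered c y + Beta_centered c (- y)) {0<..<1}"
      using that by (intro has_integral_add has_integral_Beta_kernel) auto
    from has_integral_divide[OF this, of 2] show ?thesis
      unfolding K_def by simp
  qed
  show ?thesis
  proof (rule has_integral_le[OF K])
    show "((\<lambda>p. (1 + \<alpha>) / 2 * K (r + 1) p + (1 - \<alpha>) / 2 * K (r - 1) p) has_integral
            (1 + \<alpha>) / 2 * Beta_centered c (r + 1) + (1 - \<alpha>) / 2 * Beta_centered c (r - 1)) {0<..<1}"
      by (intro has_integral_add has_integral_mult_right K) fact+
    fix p :: real
    assume "p \<in> {0<..<1}"
    define E where "E = exp ((c / 2 - 1) * ln (p * (1 - p)))"
    define L where "L = ln (p / (1 - p)) / 2"
    have KE: "K y p = E * cosh (L * y)" for y
      unfolding K_def E_def L_def using \<open>p \<in> {0<..<1}\<close>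
      by (subst Beta_kernel_symmetrized) (auto simp: mult.commute)
    have "E * cosh (L * s) \<le> E * ((1 + \<alpha>) / 2 * cosh (L * (r + 1)) + (1 - \<alpha>) / 2 * cosh (L * (r - 1)))"
      unfolding E_def by (intro mult_left_mono cosh_le_mixture assms) simp
    then show "K s p \<le> (1 + \<alpha>) / 2 * K (r + 1) p + (1 - \<alpha>) / 2 * K (r - 1) p"
      unfolding KE by (simp add: algebra_simps)
  qed fact
qed

lemma Beta_centered_plus_one:
  assumes "\<bar>y\<bar> < c"
  shows "Beta_centered (c + 1) (y + 1) = Beta_centered c y * (c + y) / (2 * c)"
    and "Beta_centered (c + 1) (y - 1) = Beta_centered c y * (c - y) / (2 * c)"
proof -
  define a b where "a = (c + y) / 2" and "b = (c - y) / 2"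
  have "0 < a" "0 < b" "a + b = c"
    using assms by (auto simp: a_def b_def field_simps)
  then have "a \<notin> \<int>\<^sub>\<le>\<^sub>0" "b \<notin> \<int>\<^sub>\<le>\<^sub>0" "c \<noteq> 0"
    by (auto elim!: nonpos_Ints_cases)
  then have "Beta (a + 1) b = Beta a b * a / c" "Beta a (b + 1) = Beta a b * b / c"
    using Beta_plus1_left[of a b] Beta_plus1_right[of b a] \<open>a + b = c\<close>
    by (simp_all add: field_simps)
  moreover have "Beta_centered (c + 1) (y + 1) = Beta (a + 1) b"
    "Beta_centered (c + 1) (y - 1) = Beta a (b + 1)" "Beta_centered c y = Beta a b"
    by (simp_all add: Beta_centered_def a_def b_def add_divide_distrib diff_divide_distrib add_ac)
  ultimately show "Beta_centered (c + 1) (y + 1) = Beta_centered c y * (c + y) / (2 * c)"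
    and "Beta_centered (c + 1) (y - 1) = Beta_centered c y * (c - y) / (2 * c)"
    by (simp_all add: a_def b_def)
qed

definition kt_pot :: "nat \<Rightarrow> real \<Rightarrow> real" where
  "kt_pot t x = 2 ^ t * Beta_centered (real t + 1) x / Beta (1 / 2) (1 / 2)"

lemma kt_psi_eq_kt_pot: "\<bar>x\<bar> \<le> real t \<Longrightarrow> kt_psi t x = ereal (kt_pot t x)"
  by (simp add: kt_psi_def kt_pot_def Beta_centered_def abs_le_iff algebra_simps)

lemma kt_pot_nonneg: "\<bar>x\<bar> \<le> real t \<Longrightarrow> 0 \<le> kt_pot t x"
  unfolding kt_pot_def using Beta_centered_pos[of x "real t + 1"] Beta_pos[of "1/2" "1/2"] by simp

lemma kt_pot_0: "kt_pot 0 0 = 1"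
  unfolding kt_pot_def Beta_centered_def using Beta_pos[of "1/2" "1/2"] by simp

lemma kt_pot_Suc_le:
  assumes "0 \<le> r" "r \<le> real t" "-1 \<le> \<alpha>" "\<alpha> \<le> 1" "0 \<le> s" "s\<^sup>2 \<le> r\<^sup>2 + 2 * r * \<alpha> + 1"
  shows "kt_pot (Suc t) s \<le> kt_pot t r * (1 + \<alpha> * r / (real t + 1))"
proof -
  have "\<bar>r\<bar> < real t + 1"
    using assms(1,2) by simp
  from Beta_centered_plus_one[OF this]
  have step:
    "Beta_centered (real t + 2) (r + 1) = Beta_centered (real t + 1) r * (real t + 1 + r) / (2 * (real t + 1))"
    "Beta_centered (real t + 2) (r - 1) = Beta_centered (real t + 1) r * (real t + 1 - r) / (2 * (real t + 1))"
    by (simp_all add: add.assoc)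
  have "Beta_centered (real t + 2) s
          \<le> (1 + \<alpha>) / 2 * Beta_centered (real t + 2) (r + 1) + (1 - \<alpha>) / 2 * Beta_centered (real t + 2) (r - 1)"
    using assms by (intro Beta_centered_le_mixture) auto
  also have "\<dots> = Beta_centered (real t + 1) r * (1 + \<alpha> * r / (real t + 1)) / 2"
  proof -
    have mix: "(1 + \<alpha>) / 2 * (B * (T + r) / (2 * T)) + (1 - \<alpha>) / 2 * (B * (T - r) / (2 * T))
            = B * (1 + \<alpha> * r / T) / 2" if "0 < T" for B T :: real
      using that by (simp add: field_simps)
    show ?thesis
      unfolding step by (rule mix) simp
  qed
  finally have "2 ^ Suc t * Beta_centered (real t + 2) s
                  \<le> 2 ^ Suc t * (Beta_centered (real t + 1) r * (1 + \<alpha> * r / (real t + 1)) / 2)"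
    by (rule mult_left_mono) simp
  then have "2 ^ Suc t * Beta_centered (real t + 2) s / Beta (1 / 2) (1 / 2)
               \<le> 2 ^ t * Beta_centered (real t + 1) r * (1 + \<alpha> * r / (real t + 1)) / Beta (1 / 2) (1 / 2)"
    using Beta_pos[of "1/2" "1/2"] by (intro divide_right_mono) simp_all
  moreover have "real (Suc t) + 1 = real t + 2"
    by simp
  ultimately show ?thesis
    unfolding kt_pot_def by (simp only: times_divide_eq_left)
qed

definition kt_Psi_real :: "'v::real_inner list \<Rightarrow> real" where
  "kt_Psi_real a = kt_pot (length a) (norm (sum_list a))"

lemma norm_sum_list_le_length:
  fixes a :: "'v::real_normed_vector list"
  assumes "\<forall>x\<in>set a. norm x \<le> 1"
  shows "norm (sum_list a) \<le> real (length a)"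
  using assms
proof (induction a)
  case (Cons x a)
  then show ?case
    using norm_triangle_ineq[of x "sum_list a"] by auto
qed simp

lemma kt_Psi_eq_kt_Psi_real:
  "\<forall>x\<in>set a. norm x \<le> 1 \<Longrightarrow> kt_Psi a = ereal (kt_Psi_real a)"
  unfolding kt_Psi_def kt_Psi_real_def by (simp add: kt_psi_eq_kt_pot norm_sum_list_le_length)

lemma kt_Psi_real_nonneg: "\<forall>x\<in>set a. norm x \<le> 1 \<Longrightarrow> 0 \<le> kt_Psi_real a"
  unfolding kt_Psi_real_def by (simp add: kt_pot_nonneg norm_sum_list_le_length)

lemma kt_Psi_real_Nil [simp]: "kt_Psi_real [] = 1"
  by (simp add: kt_Psi_real_def kt_pot_0)

lemma abs_inner_kt_bet_le:
  fixes a :: "'v::real_inner list"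
  assumes "\<forall>x\<in>set a. norm x \<le> 1" "norm g \<le> 1"
  shows "\<bar>inner g (kt_bet a)\<bar> \<le> 1"
proof -
  have "\<bar>inner g (kt_bet a)\<bar> \<le> norm g * norm (kt_bet a)"
    by (rule Cauchy_Schwarz_ineq2)
  also have "\<dots> \<le> norm (kt_bet a)"
    using assms(2) by (simp add: mult_left_le_one_le)
  also have "\<dots> = norm (sum_list a) / (real (length a) + 1)"
    by (simp add: kt_bet_def)
  also have "\<dots> \<le> 1"
    using norm_sum_list_le_length[OF assms(1)] by simp
  finally show ?thesis .
qed

lemma kt_Psi_real_snoc_le:
  fixes a :: "'v::real_inner list"
  assumes "\<forall>x\<in>set a. norm x \<le> 1" "norm g \<le> 1"
  shows "kt_Psi_real (a @ [g]) \<le> kt_Psi_real a * (1 + inner g (kt_bet a))"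
proof -
  define r where "r = norm (sum_list a)"
  define \<alpha> where "\<alpha> = (if r = 0 then 0 else inner g (sum_list a) / r)"
  have \<alpha>r: "\<alpha> * r = inner g (sum_list a)"
    by (auto simp: \<alpha>_def r_def)
  have "\<bar>\<alpha>\<bar> * r \<le> 1 * r"
    using Cauchy_Schwarz_ineq2[of g "sum_list a"] assms(2) mult_right_mono[OF assms(2), of r]
    by (simp add: r_def abs_mult flip: \<alpha>r)
  then have "\<bar>\<alpha>\<bar> \<le> 1"
    by (cases "r = 0") (auto simp: \<alpha>_def r_def)
  have "(norm (sum_list a + g))\<^sup>2 = r\<^sup>2 + 2 * inner g (sum_list a) + (norm g)\<^sup>2"
    by (simp add: r_def power2_norm_eq_inner inner_add_left inner_add_right inner_commute)
  also have "\<dots> \<le> r\<^sup>2 + 2 * r * \<alpha> + 1"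
    using assms(2) by (simp add: \<alpha>r[symmetric] power_le_one algebra_simps)
  finally have "kt_pot (Suc (length a)) (norm (sum_list a + g))
                  \<le> kt_pot (length a) r * (1 + \<alpha> * r / (real (length a) + 1))"
    using \<open>\<bar>\<alpha>\<bar> \<le> 1\<close> norm_sum_list_le_length[OF assms(1)] by (intro kt_pot_Suc_le) (auto simp: r_def)
  moreover have "inner g (kt_bet a) = \<alpha> * r / (real (length a) + 1)"
    by (simp add: kt_bet_def \<alpha>r)
  ultimately show ?thesis
    by (simp add: kt_Psi_real_def r_def)
qed

lemma sub_tuple_0 [simp]: "sub_tuple g h 0 s = []"
  by (simp add: sub_tuple_def)

lemma sub_tuple_Suc:
  "sub_tuple g h (Suc t) s = (if h (Suc t) = s then sub_tuple g h t s @ [g (Suc t)] else sub_tuple g h t s)"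
  by (simp add: sub_tuple_def)

lemma sub_tuple_in_ball:
  assumes "\<And>i. i \<in> {1..t} \<Longrightarrow> norm (g i) \<le> 1"
  shows "\<forall>x\<in>set (sub_tuple g h t s). norm x \<le> 1"
  using assms by (auto simp: sub_tuple_def)

lemma kt_Psi_sub_tuple:
  assumes "\<And>i. i \<in> {1..t} \<Longrightarrow> norm (g i) \<le> 1"
  shows "kt_Psi (sub_tuple g h t s) = ereal (kt_Psi_real (sub_tuple g h t s))"
  using assms by (intro kt_Psi_eq_kt_Psi_real sub_tuple_in_ball)

lemma set_filter_upt_Suc: "set (filter (\<lambda>i. h i = s) [1..<Suc t]) = {i \<in> {1..t}. h i = s}"
  by auto

lemma length_sub_tuple: "length (sub_tuple g h t s) = state_count h t s"
  unfolding sub_tuple_def state_count_def length_map set_filter_upt_Suc[symmetric]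
  by (rule distinct_card[symmetric]) simp

lemma sum_list_sub_tuple: "sum_list (sub_tuple g h t s) = (\<Sum>i | i \<in> {1..t} \<and> h i = s. g i)"
  unfolding sub_tuple_def set_filter_upt_Suc[symmetric]
  by (rule sum_list_distinct_conv_sum_set) simp

lemma wealth_Suc: "wealth W0 g w (Suc t) = wealth W0 g w t + inner (g (Suc t)) (w (Suc t))"
  by (simp add: wealth_def)

lemma prod_le_update_one:
  fixes f f' :: "'a \<Rightarrow> real"
  assumes "finite A" "a \<in> A" "\<And>s. s \<in> A \<Longrightarrow> 0 \<le> f s"
    and "\<And>s. s \<in> A \<Longrightarrow> s \<noteq> a \<Longrightarrow> f' s = f s" and "f' a \<le> f a * c"
  shows "prod f' A \<le> prod f A * c"
proof -
  have "prod f' (A - {a}) = prod f (A - {a})"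
    using assms(4) by (intro prod.cong) auto
  then have "prod f' A = f' a * prod f (A - {a})"
    using assms(1,2) by (simp add: prod.remove)
  also have "\<dots> \<le> f a * c * prod f (A - {a})"
    using assms(3,5) by (intro mult_right_mono prod_nonneg) auto
  also have "\<dots> = prod f A * c"
    using assms(1,2) by (simp add: prod.remove ac_simps)
  finally show ?thesis .
qed

lemma kt_wealth_ge_potentials:
  fixes g w :: "nat \<Rightarrow> 'v::real_inner"
  assumes "finite A" and h_range: "\<And>t. t \<in> {1..T} \<Longrightarrow> h t \<in> A"
    and g_ball: "\<And>t. t \<in> {1..T} \<Longrightarrow> norm (g t) \<le> 1" and "0 \<le> W0"
    and play: "\<And>t. t \<in> {1..T} \<Longrightarrow>
       w t = wealth W0 g w (t - 1) *\<^sub>R kt_bet (sub_tuple g h (t - 1) (h t))"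
    and "t \<le> T"
  shows "W0 * (\<Prod>s\<in>A. kt_Psi_real (sub_tuple g h t s)) \<le> wealth W0 g w t"
  using \<open>t \<le> T\<close>
proof (induction t)
  case 0
  then show ?case
    by (simp add: wealth_def)
next
  case (Suc t)
  define a where "a = sub_tuple g h t (h (Suc t))"
  define f where "f = 1 + inner (g (Suc t)) (kt_bet a)"
  have ball: "\<forall>x\<in>set (sub_tuple g h t s). norm x \<le> 1" for s
    using Suc.prems by (intro sub_tuple_in_ball g_ball) auto
  have "norm (g (Suc t)) \<le> 1"
    using Suc.prems by (intro g_ball) auto
  then have "\<bar>inner (g (Suc t)) (kt_bet a)\<bar> \<le> 1"
    unfolding a_def using ball by (rule abs_inner_kt_bet_le[rotated])
  then have "0 \<le> f"
    unfolding f_def by linarith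
  have "(\<Prod>s\<in>A. kt_Psi_real (sub_tuple g h (Suc t) s))
          \<le> (\<Prod>s\<in>A. kt_Psi_real (sub_tuple g h t s)) * f"
  proof (rule prod_le_update_one[OF \<open>finite A\<close>])
    show "h (Suc t) \<in> A"
      using Suc.prems by (intro h_range) auto
    show "kt_Psi_real (sub_tuple g h (Suc t) (h (Suc t))) \<le> kt_Psi_real (sub_tuple g h t (h (Suc t))) * f"
      unfolding sub_tuple_Suc f_def a_def using ball \<open>norm (g (Suc t)) \<le> 1\<close>
      by (simp add: kt_Psi_real_snoc_le)
  qed (simp_all add: sub_tuple_Suc kt_Psi_real_nonneg ball)
  then have "W0 * (\<Prod>s\<in>A. kt_Psi_real (sub_tuple g h (Suc t) s))
               \<le> W0 * (\<Prod>s\<in>A. kt_Psi_real (sub_tuple g h t s)) * f"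
    using \<open>0 \<le> W0\<close> by (simp add: mult_left_mono mult.assoc)
  also have "\<dots> \<le> wealth W0 g w t * f"
    using Suc \<open>0 \<le> f\<close> by (intro mult_right_mono) auto
  also have "\<dots> = wealth W0 g w (Suc t)"
    using play[of "Suc t"] Suc.prems by (simp add: wealth_Suc f_def a_def algebra_simps)
  finally show ?case .
qed

lemma sum_inner_by_state:
  assumes "\<And>t. t \<in> {1..T} \<Longrightarrow> h t \<in> A" "finite A"
  shows "(\<Sum>t=1..T. inner (g t) (u (h t))) = (\<Sum>s\<in>A. inner (sum_list (sub_tuple g h T s)) (u s))"
proof -
  have "(\<Sum>t=1..T. inner (g t) (u (h t))) = (\<Sum>s\<in>A. \<Sum>t | t \<in> {1..T} \<and> h t = s. inner (g t) (u (h t)))"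
    using assms by (intro sum.group[symmetric]) auto
  also have "\<dots> = (\<Sum>s\<in>A. inner (sum_list (sub_tuple g h T s)) (u s))"
    by (intro sum.cong) (auto simp: sum_list_sub_tuple inner_sum_left)
  finally show ?thesis .
qed

lemma kt_phi_ge:
  "ereal (\<Sum>s=1..S. y s * x s) - (\<Prod>s\<in>{1..S}. kt_psi (Tc s) (x s)) \<le> kt_phi S Tc y"
proof -
  have "ereal (\<Sum>s=1..S. y s * restrict x {1..S} s) - (\<Prod>s\<in>{1..S}. kt_psi (Tc s) (restrict x {1..S} s))
          \<le> kt_phi S Tc y"
    unfolding kt_phi_def fenchel_dual_def by (rule SUP_upper) auto
  then show ?thesis
    by simp
qed

lemma regret_le_via_kt_phi:
  fixes g w u :: "nat \<Rightarrow> 'v::real_inner"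
  assumes wealth: "W0 * (\<Prod>s\<in>{1..S}. kt_Psi_real (sub_tuple g h T s)) \<le> wealth W0 g w T"
    and h_range: "\<And>t. t \<in> {1..T} \<Longrightarrow> h t \<in> {1..S}"
    and g_ball: "\<And>t. t \<in> {1..T} \<Longrightarrow> norm (g t) \<le> 1" and "0 < W0"
  shows "ereal (regret u h g w T) \<le> ereal W0 + ereal W0 * kt_phi S (state_count h T) (\<lambda>s. norm (u s) / W0)"
proof -
  define G where "G s = sum_list (sub_tuple g h T s)" for s
  define Q where "Q = (\<Sum>s=1..S. norm (u s) / W0 * norm (G s))"
  define P where "P = (\<Prod>s\<in>{1..S}. kt_Psi_real (sub_tuple g h T s))"
  have phi: "ereal (Q - P) \<le> kt_phi S (state_count h T) (\<lambda>s. norm (u s) / W0)"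
  proof -
    have "kt_psi (state_count h T s) (norm (G s)) = ereal (kt_Psi_real (sub_tuple g h T s))" for s
      using kt_Psi_sub_tuple[OF g_ball, where h = h and s = s] by (simp add: kt_Psi_def G_def length_sub_tuple)
    then show ?thesis
      using kt_phi_ge[where y = "\<lambda>s. norm (u s) / W0" and x = "\<lambda>s. norm (G s)" and Tc = "state_count h T"]
      by (simp add: Q_def P_def prod_ereal)
  qed
  have "(\<Sum>t=1..T. inner (g t) (u (h t))) = (\<Sum>s=1..S. inner (G s) (u s))"
    unfolding G_def using h_range by (intro sum_inner_by_state) auto
  also have "\<dots> \<le> (\<Sum>s=1..S. norm (G s) * norm (u s))"
    by (intro sum_mono Cauchy_Schwarz_ineq2[THEN abs_le_D1])
  also have "\<dots> = W0 * Q"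
    using \<open>0 < W0\<close> by (simp add: Q_def sum_distrib_left mult.commute)
  finally have "regret u h g w T \<le> W0 + W0 * (Q - P)"
    using wealth by (simp add: regret_def wealth_def P_def algebra_simps)
  then have "ereal (regret u h g w T) \<le> ereal W0 + ereal W0 * ereal (Q - P)"
    by simp
  also have "\<dots> \<le> ereal W0 + ereal W0 * kt_phi S (state_count h T) (\<lambda>s. norm (u s) / W0)"
    using phi \<open>0 < W0\<close> by (intro add_left_mono ereal_mult_left_mono) simp_all
  finally show ?thesis .
qed

theorem theorem3:
  fixes S T :: nat and h :: "nat \<Rightarrow> nat" and g w :: "nat \<Rightarrow> 'v::{real_inner, complete_space}"
    and W0 :: real
  assumes "S \<ge> 1" and "T \<ge> 1"
    and h_range: "\<And>t. t \<ge> 1 \<Longrightarrow> h t \<in> {1..S}"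
    and g_ball: "\<And>t. t \<in> {1..T} \<Longrightarrow> norm (g t) \<le> 1"
    and "W0 > 0"
    and play: "\<And>t. t \<in> {1..T} \<Longrightarrow>
       w t = wealth W0 g w (t - 1) *\<^sub>R kt_bet (sub_tuple g h (t - 1) (h t))"
  shows "ereal (wealth W0 g w T) \<ge> ereal W0 * (\<Prod>s\<in>{1..S}. kt_Psi (sub_tuple g h T s))
         \<and> (\<forall>u :: nat \<Rightarrow> 'v. ereal (regret u h g w T)
           \<le> ereal W0 + ereal W0 * kt_phi S (state_count h T) (\<lambda>s. norm (u s) / W0))"
proof -
  have h_range': "\<And>t. t \<in> {1..T} \<Longrightarrow> h t \<in> {1..S}"
    using h_range by simp
  have wealth: "W0 * (\<Prod>s\<in>{1..S}. kt_Psi_real (sub_tuple g h T s)) \<le> wealth W0 g w T"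
    using kt_wealth_ge_potentials[OF finite_atLeastAtMost h_range' g_ball _ play order_refl] \<open>W0 > 0\<close>
    by simp
  have "(\<Prod>s\<in>{1..S}. kt_Psi (sub_tuple g h T s)) = ereal (\<Prod>s\<in>{1..S}. kt_Psi_real (sub_tuple g h T s))"
    using kt_Psi_sub_tuple[OF g_ball] by (simp add: prod_ereal)
  with wealth show ?thesis
    using regret_le_via_kt_phi[OF wealth h_range' g_ball \<open>W0 > 0\<close>] by simp
qed

end
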